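(* Let $E$ be a Banach space, $p$ a prime, and $\sigma:E\to E$ a linear isometry with $\sigma^p=\mathrm{id}$, generating a $\mathbb{Z}_p$-action; let $F_\sigma=\{U\in E:\sigma U=U\}$. Let $A\subset E$ be a compact set such that $\mathbb{Z}_p(A):=\bigcup_{i=0}^{p-1}\sigma^i(A)\subset E\setminus F_\sigma$ and $\bigcap_{i=0}^{p-1}\sigma^i(A)=\emptyset$. Then $\gamma(\mathbb{Z}_p(A))\le p-1$.
   Context: For a compact $\sigma$-invariant set $A\subset E\setminus F_\sigma$, the index $\gamma(A)$ is the smallest $m\in\mathbb{N}$ for which there exists a continuous map $h:A\to\mathbb{C}^m\setminus\{0\}$ with $h(\sigma U)=e^{2\pi i/p}h(U)$ for all $U\in A$; $\gamma(A)=\infty$ if no such map exists. *)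

theory Defs
  imports "HOL-Analysis.Analysis" "HOL-Library.Extended_Nat"
begin

definition fixset :: "('a \<Rightarrow> 'a) \<Rightarrow> 'a set" where
  "fixset \<sigma> = {U. \<sigma> U = U}"

definition orbit_set :: "('a \<Rightarrow> 'a) \<Rightarrow> nat \<Rightarrow> 'a set \<Rightarrow> 'a set" where
  "orbit_set \<sigma> p A = (\<Union>i<p. (\<sigma> ^^ i) ` A)"

text \<open>C^m is modelled as the functions nat => complex vanishing at all indices >= m,
  carrying the (product) topology; on this subspace it coincides with the Euclidean one.\<close>
definition cvec :: "nat \<Rightarrow> (nat \<Rightarrow> complex) set" where
  "cvec m = {v. \<forall>j\<ge>m. v j = 0}"

text \<open>Index gamma(A): least m admitting a continuous equivariant map A -> C^m \ {0};
  Inf of the empty set of enat is infinity.\<close>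
definition zp_index :: "('a::topological_space \<Rightarrow> 'a) \<Rightarrow> nat \<Rightarrow> 'a set \<Rightarrow> enat" where
  "zp_index \<sigma> p A = Inf {enat m | m. \<exists>h :: 'a \<Rightarrow> nat \<Rightarrow> complex.
      continuous_on A h \<and> (\<forall>U\<in>A. h U \<in> cvec m \<and> h U \<noteq> (\<lambda>j. 0)) \<and>
      (\<forall>U\<in>A. h (\<sigma> U) = (\<lambda>j. exp (2 * pi * \<i> / of_nat p) * h U j))}"

end

theory Submission
  imports Defs "HOL-Number_Theory.Cong"
begin

(* Put a_k(U) = dist(sigma^k U, A) for k < p and let h_j(U) = sum_k a_k(U) zeta^(j k), zeta = e^(2 pi i/p),
   be the discrete Fourier transform of this vector. As sigma shifts the a_k cyclically,
   h_j(sigma U) = zeta^(-j) h_j(U). Since p is prime, each j = 1..p-1 has an m_j with j m_j = -1 (mod p),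
   so U |-> (h_j(U)^(m_j)) for j = 1..p-1 is an equivariant map into C^(p-1). Were it zero at a point U
   of the orbit set, Fourier inversion would make all a_k(U) equal; one of them vanishes because U lies
   in some sigma^i(A), hence all do, and U would lie in the intersection of the sigma^i(A). *)

definition unit_root :: "nat \<Rightarrow> complex" where
  "unit_root p = exp (2 * pi * \<i> / of_nat p)"

definition dft :: "nat \<Rightarrow> (nat \<Rightarrow> complex) \<Rightarrow> nat \<Rightarrow> complex" where
  "dft p f j = (\<Sum>k<p. f k * unit_root p ^ (j * k))"

lemma unit_root_pow_eq_1_iff:
  assumes "p \<ge> 1"
  shows "unit_root p ^ n = 1 \<longleftrightarrow> p dvd n"
proof -
  have "unit_root p ^ n = exp (2 * of_real pi * \<i> * of_nat n / of_nat p)"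
    unfolding unit_root_def exp_of_nat_mult[symmetric] by (simp add: mult_ac)
  then show ?thesis
    using complex_root_unity_eq_1[OF assms] by simp
qed

lemma unit_root_pow_cong:
  assumes "p \<ge> 1" "[m = n] (mod p)"
  shows "unit_root p ^ m = unit_root p ^ n"
proof -
  have "unit_root p ^ k = unit_root p ^ (k mod p)" for k
  proof -
    have "unit_root p ^ k = (unit_root p ^ p) ^ (k div p) * unit_root p ^ (k mod p)"
      by (metis div_mult_mod_eq power_add power_mult mult.commute)
    then show ?thesis
      using unit_root_pow_eq_1_iff[OF assms(1), of p] by simp
  qed
  then show ?thesis
    using assms(2) unfolding cong_def by metis
qed

lemma sum_unit_root_powers:
  assumes "p \<ge> 1"
  shows "(\<Sum>j<p. (unit_root p ^ n) ^ j) = (if p dvd n then of_nat p else 0)"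
proof (cases "p dvd n")
  case True
  then show ?thesis
    using unit_root_pow_eq_1_iff[OF assms, of n] by simp
next
  case False
  have "(unit_root p ^ n) ^ p = 1"
    using unit_root_pow_eq_1_iff[OF assms, of "n * p"] by (simp add: power_mult)
  then show ?thesis
    using False unit_root_pow_eq_1_iff[OF assms, of n] by (simp add: sum_gp_strict)
qed

lemma dft_inversion:
  assumes "l < p"
  shows "(\<Sum>j<p. dft p f j * unit_root p ^ (j * (p - l))) = of_nat p * f l"
proof -
  let ?\<zeta> = "unit_root p"
  have orth: "(\<Sum>j<p. (?\<zeta> ^ (k + (p - l))) ^ j) = (if k = l then of_nat p else 0)"
    if "k < p" for k
  proof -
    have "p dvd k + (p - l) \<longleftrightarrow> k = l"
    proof
      assume "p dvd k + (p - l)"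
      then obtain q where q: "k + (p - l) = p * q" ..
      have "0 < p * q" "p * q < p * 2"
        using q that assms by linarith+
      then have "q = 1" by simp
      then show "k = l" using q assms by simp
    qed (use assms in simp)
    then show ?thesis
      using sum_unit_root_powers[of p "k + (p - l)"] assms by simp
  qed
  have "(\<Sum>j<p. dft p f j * ?\<zeta> ^ (j * (p - l)))
      = (\<Sum>k<p. f k * (\<Sum>j<p. (?\<zeta> ^ (k + (p - l))) ^ j))"
    unfolding dft_def sum_distrib_right sum_distrib_left
    by (subst sum.swap) (simp add: power_add power_mult[symmetric] algebra_simps)
  also have "\<dots> = (\<Sum>k<p. if k = l then f k * of_nat p else 0)"
    using orth by (intro sum.cong) auto
  also have "\<dots> = of_nat p * f l"
    using assms by (simp add: sum.delta)
  finally show ?thesis .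
qed

lemma dft_vanishing_imp_constant:
  assumes "\<And>j. 0 < j \<Longrightarrow> j < p \<Longrightarrow> dft p f j = 0" "l < p"
  shows "f l = f 0"
proof -
  have "of_nat p * f k = dft p f 0" if "k < p" for k
  proof -
    have "(\<Sum>j<p. dft p f j * unit_root p ^ (j * (p - k)))
        = (\<Sum>j\<in>{0}. dft p f j * unit_root p ^ (j * (p - k)))"
      using assms by (intro sum.mono_neutral_right) auto
    then show ?thesis
      using dft_inversion[OF that] by simp
  qed
  then have "of_nat p * f l = of_nat p * f 0"
    using assms(2) by simp
  moreover have "p \<noteq> 0"
    using assms(2) by simp
  ultimately show ?thesis by simp
qed

lemma sum_lessThan_cyclic_shift:
  fixes f :: "nat \<Rightarrow> 'b::comm_monoid_add"
  assumes "f p = f 0"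
  shows "(\<Sum>k<p. f (Suc k)) = (\<Sum>k<p. f k)"
proof (cases p)
  case (Suc n)
  have "(\<Sum>k<Suc n. f (Suc k)) = f 0 + (\<Sum>k<n. f (Suc k))"
    using assms Suc by (simp add: add.commute)
  also have "\<dots> = (\<Sum>k<Suc n. f k)"
    by (rule sum.lessThan_Suc_shift[symmetric])
  finally show ?thesis
    using Suc by simp
qed simp

lemma dft_cyclic_shift:
  assumes "f p = f 0"
  shows "dft p f j = unit_root p ^ j * dft p (\<lambda>k. f (Suc k)) j"
proof -
  have "unit_root p ^ (j * p) = 1"
    by (cases "p = 0") (simp_all add: unit_root_pow_eq_1_iff)
  then have "(\<lambda>k. f k * unit_root p ^ (j * k)) p = (\<lambda>k. f k * unit_root p ^ (j * k)) 0"
    using assms by simp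
  from sum_lessThan_cyclic_shift[OF this] show ?thesis
    unfolding dft_def by (simp add: sum_distrib_left power_add algebra_simps)
qed

lemma power_twist_to_unit_root:
  assumes "p \<ge> 1" "x = unit_root p ^ j * y" "[j * m = p - 1] (mod p)"
  shows "y ^ m = unit_root p * x ^ m"
proof -
  have "[j * m + 1 = (p - 1) + 1] (mod p)"
    using assms(3) by (rule cong_add) (rule cong_refl)
  then have "unit_root p ^ Suc (j * m) = unit_root p ^ p"
    using assms(1) by (intro unit_root_pow_cong) simp_all
  moreover have "unit_root p * x ^ m = unit_root p ^ Suc (j * m) * y ^ m"
    using assms(2) by (simp add: power_mult_distrib power_mult)
  ultimately show ?thesis
    using unit_root_pow_eq_1_iff[OF assms(1), of p] by simp
qed

lemma prime_exists_mult_cong_minus_one: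
  fixes p j :: nat
  assumes "prime p" "\<not> p dvd j"
  shows "\<exists>m. [j * m = p - 1] (mod p)"
proof -
  have "coprime j p"
    using prime_imp_coprime[OF assms] by (simp add: coprime_commute)
  then obtain x where "[j * x = 1] (mod p)"
    using cong_solve_coprime_nat by auto
  then have "[j * (x * (p - 1)) = 1 * (p - 1)] (mod p)"
    unfolding mult.assoc[symmetric] by (rule cong_mult) (rule cong_refl)
  then show ?thesis by auto
qed

lemma zp_index_le:
  assumes "continuous_on B h" "\<And>U. U \<in> B \<Longrightarrow> h U \<in> cvec m" "\<And>U. U \<in> B \<Longrightarrow> h U \<noteq> (\<lambda>j. 0)"
    "\<And>U. U \<in> B \<Longrightarrow> h (\<sigma> U) = (\<lambda>j. unit_root p * h U j)"
  shows "zp_index \<sigma> p B \<le> enat m"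
  unfolding zp_index_def using assms unfolding unit_root_def by (blast intro: Inf_lower)

lemma funpow_complement_cancel:
  assumes "f ^^ p = id" "j \<le> p"
  shows "(f ^^ j) ((f ^^ ((p - j) mod p)) x) = x" "(f ^^ ((p - j) mod p)) ((f ^^ j) x) = x"
proof -
  have "f ^^ (j + (p - j) mod p) = id"
    using assms by (cases "j = 0") auto
  moreover have "(f ^^ a) ((f ^^ b) x) = (f ^^ (a + b)) x" for a b
    by (simp add: funpow_add)
  ultimately show "(f ^^ j) ((f ^^ ((p - j) mod p)) x) = x" "(f ^^ ((p - j) mod p)) ((f ^^ j) x) = x"
    by (simp_all add: add.commute)
qed

definition orbit_dist :: "('a::metric_space \<Rightarrow> 'a) \<Rightarrow> 'a set \<Rightarrow> 'a \<Rightarrow> nat \<Rightarrow> complex" where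
  "orbit_dist \<sigma> A U k = of_real (infdist ((\<sigma> ^^ k) U) A)"

lemma continuous_on_dft_orbit_dist:
  assumes "continuous_on UNIV \<sigma>"
  shows "continuous_on S (\<lambda>U. dft p (orbit_dist \<sigma> A U) j)"
proof -
  have "continuous_on S (\<sigma> ^^ k)" for k
    by (induction k) (auto intro: continuous_on_compose2[OF assms])
  then show ?thesis
    unfolding dft_def orbit_dist_def by (intro continuous_intros)
qed

lemma dft_orbit_dist_shift:
  assumes "\<sigma> ^^ p = id"
  shows "dft p (orbit_dist \<sigma> A U) j = unit_root p ^ j * dft p (orbit_dist \<sigma> A (\<sigma> U)) j"
proof -
  have "orbit_dist \<sigma> A (\<sigma> U) = (\<lambda>k. orbit_dist \<sigma> A U (Suc k))"
    unfolding orbit_dist_def by (simp add: funpow_swap1)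
  moreover have "orbit_dist \<sigma> A U p = orbit_dist \<sigma> A U 0"
    using assms by (simp add: orbit_dist_def)
  ultimately show ?thesis
    using dft_cyclic_shift by metis
qed

lemma constant_orbit_dist_imp_mem_Inter:
  assumes "\<sigma> ^^ p = id" "closed A" "U \<in> orbit_set \<sigma> p A"
    and const: "\<And>l. l < p \<Longrightarrow> orbit_dist \<sigma> A U l = orbit_dist \<sigma> A U 0"
  shows "U \<in> (\<Inter>i<p. (\<sigma> ^^ i) ` A)"
proof -
  obtain i x where i: "i < p" and "x \<in> A" and U: "U = (\<sigma> ^^ i) x"
    using assms(3) unfolding orbit_set_def by auto
  then have "A \<noteq> {}" by auto
  have "(\<sigma> ^^ ((p - i) mod p)) U = x"
    using funpow_complement_cancel(2)[OF assms(1)] i U by simp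
  then have "orbit_dist \<sigma> A U ((p - i) mod p) = 0"
    using \<open>x \<in> A\<close> unfolding orbit_dist_def by simp
  then have zero: "orbit_dist \<sigma> A U l = 0" if "l < p" for l
    using const[OF that] const[of "(p - i) mod p"] i by simp
  show ?thesis
  proof
    fix j assume "j \<in> {..<p}"
    then have "(p - j) mod p < p" "j \<le> p" by auto
    then have "(\<sigma> ^^ ((p - j) mod p)) U \<in> A"
      using zero in_closed_iff_infdist_zero[OF assms(2) \<open>A \<noteq> {}\<close>]
      unfolding orbit_dist_def by simp
    moreover have "(\<sigma> ^^ j) ((\<sigma> ^^ ((p - j) mod p)) U) = U"
      using funpow_complement_cancel(1)[OF assms(1) \<open>j \<le> p\<close>] .
    ultimately show "U \<in> (\<sigma> ^^ j) ` A"
      by (metis image_eqI)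
  qed
qed

lemma zp_index_orbit_set_le:
  fixes \<sigma> :: "'a::metric_space \<Rightarrow> 'a"
  assumes "prime p" "continuous_on UNIV \<sigma>" "\<sigma> ^^ p = id" "closed A"
    and disjoint: "(\<Inter>i<p. (\<sigma> ^^ i) ` A) = {}"
  shows "zp_index \<sigma> p (orbit_set \<sigma> p A) \<le> enat (p - 1)"
proof -
  define h where "h j U = dft p (orbit_dist \<sigma> A U) j" for j U
  have "p \<ge> 1" using prime_ge_1_nat[OF assms(1)] .
  obtain m where m: "\<And>j. 0 < j \<Longrightarrow> j < p \<Longrightarrow> [j * m j = p - 1] (mod p)"
    using prime_exists_mult_cong_minus_one[OF assms(1)]
    by (metis dvd_imp_le linorder_not_le)
  define H where "H U i = (if i < p - 1 then h (Suc i) U ^ m (Suc i) else 0)" for U i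
  show ?thesis
  proof (rule zp_index_le)
    show "continuous_on (orbit_set \<sigma> p A) H"
    proof (rule continuous_on_coordinatewise_then_product)
      show "continuous_on (orbit_set \<sigma> p A) (\<lambda>U. H U i)" for i
        unfolding H_def h_def
        by (cases "i < p - 1") (simp_all add: continuous_on_power continuous_on_dft_orbit_dist assms(2))
    qed
    show "H U \<in> cvec (p - 1)" for U
      unfolding cvec_def H_def by simp
    show "H (\<sigma> U) = (\<lambda>i. unit_root p * H U i)" for U
      unfolding H_def h_def
      using power_twist_to_unit_root[OF \<open>p \<ge> 1\<close> dft_orbit_dist_shift[OF assms(3)] m] by auto
    show "H U \<noteq> (\<lambda>i. 0)" if "U \<in> orbit_set \<sigma> p A" for U
    proof
      assume "H U = (\<lambda>i. 0)"
      then have "dft p (orbit_dist \<sigma> A U) (Suc i) = 0" if "i < p - 1" for i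
        using fun_cong[of "H U" _ i] that unfolding H_def h_def by simp
      then have "dft p (orbit_dist \<sigma> A U) j = 0" if "0 < j" "j < p" for j
        using that by (cases j) auto
      then have "U \<in> (\<Inter>i<p. (\<sigma> ^^ i) ` A)"
        by (intro constant_orbit_dist_imp_mem_Inter[OF assms(3,4) \<open>U \<in> orbit_set \<sigma> p A\<close>]
            dft_vanishing_imp_constant)
      then show False using disjoint by simp
    qed
  qed
qed

theorem mainTheorem15:
  fixes \<sigma> :: "'a::banach \<Rightarrow> 'a" and p :: nat and A :: "'a set"
  assumes "prime p"
    and "linear \<sigma>"
    and "\<And>x. norm (\<sigma> x) = norm x"
    and "\<sigma> ^^ p = id"
    and "compact A"
    and "orbit_set \<sigma> p A \<subseteq> - fixset \<sigma>"
    and "(\<Inter>i<p. (\<sigma> ^^ i) ` A) = {}"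
  shows "zp_index \<sigma> p (orbit_set \<sigma> p A) \<le> enat (p - 1)"
proof (rule zp_index_orbit_set_le)
  have "bounded_linear \<sigma>"
    using assms(2,3) by (intro bounded_linear_intro[where K = 1]) (auto simp: linear_add linear_scale)
  then show "continuous_on UNIV \<sigma>"
    by (rule linear_continuous_on)
  show "closed A"
    using assms(5) by (rule compact_imp_closed)
qed (rule assms)+

end
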